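(* Let $G_b$ be a bipartite graph with left vertices $r_1,\dots,r_n$ and right vertices $1,\dots,n$, and let $\Omega$ be the (assumed nonempty) set of perfect matchings of $G_b$, with uniform prior $\Phi\sim\mathrm{Unif}(\Omega)$. For $I\subseteq[n]$ and $\phi\in\Omega$ let $f(I,\phi)=|\Omega|-|\Omega^{(I,\phi)}|$. Then (i) $f$ is adaptive monotone and adaptive submodular with respect to the uniform prior on $\Omega$; and (ii) for every budget $K\in\{1,\dots,n\}$, the adaptive greedy policy $\pi^{g}$ with budget $K$ satisfies $F(\pi^{g})\ge (1-1/e)\max_{\pi}F(\pi)$, where the maximum is over all adaptive policies with budget $K$.
   Context: Each $\phi\in\Omega$ matches each right vertex $v$ to a unique left vertex $\phi(v)$; intervening on item $v\in[n]$ under realization $\phi$ yields the outcome $\phi(v)$ (the matching edge $(\phi(v),v)$). For $I\subseteq[n]$, $\Omega^{(I,\phi)}=\{g\in\Omega: g(v)=\phi(v)\ \forall v\in I\}$. A partial realization is a map $\psi$ from a set $\mathrm{dom}(\psi)\subseteq[n]$ to left vertices such that some $\phi\in\Omega$ agrees with $\psi$ on $\mathrm{dom}(\psi)$ (written $\phi\sim\psi$). For $v\notin\mathrm{dom}(\psi)$, the conditional expected marginal benefit is $\Delta(v\mid\psi)=\mathbb{E}[f(\mathrm{dom}(\psi)\cup\{v\},\Phi)-f(\mathrm{dom}(\psi),\Phi)\mid \Phi\sim\psi]$, where conditioning means $\Phi$ is uniform over $\{\phi\in\Omega:\phi\sim\psi\}$. $f$ is adaptive monotone if $\Delta(v\mid\psi)\ge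 0$ for all partial realizations $\psi$ and $v\notin\mathrm{dom}(\psi)$; adaptive submodular if $\Delta(v\mid\psi)\ge\Delta(v\mid\psi')$ whenever $\psi\subseteq\psi'$ (i.e. $\mathrm{dom}(\psi)\subseteq\mathrm{dom}(\psi')$ and $\psi'$ agrees with $\psi$ on $\mathrm{dom}(\psi)$) are partial realizations and $v\notin\mathrm{dom}(\psi')$. An adaptive policy with budget $K$ selects items $i_1,\dots,i_K$ sequentially, each $i_t$ being a function of the previous items and their observed outcomes $((i_1,\phi(i_1)),\dots,(i_{t-1},\phi(i_{t-1})))$; $I(\pi,\phi)$ is the set selected under realization $\phi$, and $F(\pi)=\mathbb{E}_{\Phi\sim\mathrm{Unif}(\Omega)}[f(I(\pi,\Phi),\Phi)]$. The adaptive greedy policy selects, at each step with current partial realization $\psi$, an item $v\notin\mathrm{dom}(\psi)$ maximizing $\Delta(v\mid\psi)$. *)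

theory Defs
  imports "HOL-Library.FuncSet" Complex_Main
begin

text \<open>Right vertices (items) are 1..n, left vertices r_1..r_n are represented by 1..n.
  E l v means that left vertex r_l is adjacent to right vertex v.
  A realization phi maps each right vertex v to its matched left vertex phi v.\<close>

definition perfect_matchings :: "nat \<Rightarrow> (nat \<Rightarrow> nat \<Rightarrow> bool) \<Rightarrow> (nat \<Rightarrow> nat) set" where
  "perfect_matchings n E =
     {\<phi> \<in> {1..n} \<rightarrow>\<^sub>E {1..n}. bij_betw \<phi> {1..n} {1..n} \<and> (\<forall>v\<in>{1..n}. E (\<phi> v) v)}"

definition Omega_restr :: "(nat \<Rightarrow> nat) set \<Rightarrow> nat set \<Rightarrow> (nat \<Rightarrow> nat) \<Rightarrow> (nat \<Rightarrow> nat) set" where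
  "Omega_restr \<Omega> I \<phi> = {g \<in> \<Omega>. \<forall>v\<in>I. g v = \<phi> v}"

definition f_match :: "(nat \<Rightarrow> nat) set \<Rightarrow> nat set \<Rightarrow> (nat \<Rightarrow> nat) \<Rightarrow> real" where
  "f_match \<Omega> I \<phi> = real (card \<Omega>) - real (card (Omega_restr \<Omega> I \<phi>))"

definition consistent :: "(nat \<Rightarrow> nat) \<Rightarrow> (nat \<rightharpoonup> nat) \<Rightarrow> bool" where
  "consistent \<phi> \<psi> \<longleftrightarrow> (\<forall>v\<in>dom \<psi>. \<psi> v = Some (\<phi> v))"

definition partial_realization :: "nat \<Rightarrow> (nat \<Rightarrow> nat) set \<Rightarrow> (nat \<rightharpoonup> nat) \<Rightarrow> bool" where
  "partial_realization n \<Omega> \<psi> \<longleftrightarrow> dom \<psi> \<subseteq> {1..n} \<and> (\<exists>\<phi>\<in>\<Omega>. consistent \<phi> \<psi>)"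

definition cond_set :: "(nat \<Rightarrow> nat) set \<Rightarrow> (nat \<rightharpoonup> nat) \<Rightarrow> (nat \<Rightarrow> nat) set" where
  "cond_set \<Omega> \<psi> = {\<phi> \<in> \<Omega>. consistent \<phi> \<psi>}"

definition cond_marginal ::
  "(nat \<Rightarrow> nat) set \<Rightarrow> (nat set \<Rightarrow> (nat \<Rightarrow> nat) \<Rightarrow> real) \<Rightarrow> (nat \<rightharpoonup> nat) \<Rightarrow> nat \<Rightarrow> real" where
  "cond_marginal \<Omega> f \<psi> v =
     (\<Sum>\<phi>\<in>cond_set \<Omega> \<psi>. f (insert v (dom \<psi>)) \<phi> - f (dom \<psi>) \<phi>) / real (card (cond_set \<Omega> \<psi>))"

definition adaptive_monotone ::
  "nat \<Rightarrow> (nat \<Rightarrow> nat) set \<Rightarrow> (nat set \<Rightarrow> (nat \<Rightarrow> nat) \<Rightarrow> real) \<Rightarrow> bool" where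
  "adaptive_monotone n \<Omega> f \<longleftrightarrow>
     (\<forall>\<psi> v. partial_realization n \<Omega> \<psi> \<longrightarrow> v \<in> {1..n} - dom \<psi> \<longrightarrow> cond_marginal \<Omega> f \<psi> v \<ge> 0)"

definition adaptive_submodular ::
  "nat \<Rightarrow> (nat \<Rightarrow> nat) set \<Rightarrow> (nat set \<Rightarrow> (nat \<Rightarrow> nat) \<Rightarrow> real) \<Rightarrow> bool" where
  "adaptive_submodular n \<Omega> f \<longleftrightarrow>
     (\<forall>\<psi> \<psi>' v. partial_realization n \<Omega> \<psi> \<longrightarrow> partial_realization n \<Omega> \<psi>' \<longrightarrow> \<psi> \<subseteq>\<^sub>m \<psi>' \<longrightarrow>
        v \<in> {1..n} - dom \<psi>' \<longrightarrow> cond_marginal \<Omega> f \<psi> v \<ge> cond_marginal \<Omega> f \<psi>' v)"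

text \<open>An adaptive policy maps the observed history (list of (item, outcome)) to the next item.\<close>
type_synonym policy = "(nat \<times> nat) list \<Rightarrow> nat"

fun run :: "policy \<Rightarrow> (nat \<Rightarrow> nat) \<Rightarrow> nat \<Rightarrow> (nat \<times> nat) list" where
  "run \<pi> \<phi> 0 = []"
| "run \<pi> \<phi> (Suc t) = run \<pi> \<phi> t @ [(\<pi> (run \<pi> \<phi> t), \<phi> (\<pi> (run \<pi> \<phi> t)))]"

definition selected :: "policy \<Rightarrow> (nat \<Rightarrow> nat) \<Rightarrow> nat \<Rightarrow> nat set" where
  "selected \<pi> \<phi> t = fst ` set (run \<pi> \<phi> t)"

definition valid_policy :: "nat \<Rightarrow> (nat \<Rightarrow> nat) set \<Rightarrow> nat \<Rightarrow> policy \<Rightarrow> bool" where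
  "valid_policy n \<Omega> K \<pi> \<longleftrightarrow>
     (\<forall>\<phi>\<in>\<Omega>. \<forall>t<K. \<pi> (run \<pi> \<phi> t) \<in> {1..n} - selected \<pi> \<phi> t)"

definition policy_value ::
  "(nat \<Rightarrow> nat) set \<Rightarrow> (nat set \<Rightarrow> (nat \<Rightarrow> nat) \<Rightarrow> real) \<Rightarrow> nat \<Rightarrow> policy \<Rightarrow> real" where
  "policy_value \<Omega> f K \<pi> = (\<Sum>\<phi>\<in>\<Omega>. f (selected \<pi> \<phi> K) \<phi>) / real (card \<Omega>)"

text \<open>Adaptive greedy policy (any tie-breaking): at each step, with the current partial
  realization psi = map_of(history), it picks an unselected item maximizing Delta(. | psi).\<close>
definition greedy_policy ::
  "nat \<Rightarrow> (nat \<Rightarrow> nat) set \<Rightarrow> (nat set \<Rightarrow> (nat \<Rightarrow> nat) \<Rightarrow> real) \<Rightarrow> nat \<Rightarrow> policy \<Rightarrow> bool" where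
  "greedy_policy n \<Omega> f K \<pi> \<longleftrightarrow> valid_policy n \<Omega> K \<pi> \<and>
     (\<forall>\<phi>\<in>\<Omega>. \<forall>t<K. \<forall>u\<in>{1..n} - selected \<pi> \<phi> t.
        cond_marginal \<Omega> f (map_of (run \<pi> \<phi> t)) u
          \<le> cond_marginal \<Omega> f (map_of (run \<pi> \<phi> t)) (\<pi> (run \<pi> \<phi> t)))"

end

theory Submission
  imports Defs
begin

(* Under the uniform prior, the expected gain of probing item v after observing psi is the
  number of ordered pairs of consistent realizations that disagree at v, divided by the number
  of consistent realizations. Adding one realization x to a set T of m realizations adds 2d
  disagreeing pairs, where d realizations of T disagree with x at v, while T itself has at most
  2dm of them; so this average can only grow with the consistent set, i.e. it shrinks as more is
  observed, which is adaptive submodularity.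

  The approximation bound is the argument of Golovin and Krause. Run any budget-K policy on top
  of the first i greedy steps: by the tower property each of its K steps gains in expectation a
  conditional marginal benefit, which by adaptive submodularity and the greedy choice is at most
  the expected gain of greedy step i+1. Hence the gap to the optimum shrinks by a factor
  1 - 1/K per greedy step, and (1 - 1/K)^K <= 1/e. *)

definition revealed :: "(nat \<Rightarrow> nat) \<Rightarrow> nat set \<Rightarrow> (nat \<rightharpoonup> nat)" where
  "revealed \<phi> A = (Some \<circ> \<phi>) |` A"

lemma revealed_apply: "revealed \<phi> A v = (if v \<in> A then Some (\<phi> v) else None)"
  by (simp add: revealed_def)

lemma dom_revealed [simp]: "dom (revealed \<phi> A) = A"
  by (auto simp: revealed_apply split: if_splits)

lemma cond_set_revealed: "cond_set \<Omega> (revealed \<phi> A) = {\<phi>' \<in> \<Omega>. \<forall>v\<in>A. \<phi>' v = \<phi> v}"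
  by (auto simp: cond_set_def consistent_def revealed_apply)

lemma revealed_mono: "A \<subseteq> B \<Longrightarrow> revealed \<phi> A \<subseteq>\<^sub>m revealed \<phi> B"
  by (auto simp: revealed_apply map_le_def)

lemma partial_realization_revealed:
  "\<phi> \<in> \<Omega> \<Longrightarrow> A \<subseteq> {1..n} \<Longrightarrow> partial_realization n \<Omega> (revealed \<phi> A)"
  by (auto simp: partial_realization_def consistent_def revealed_apply)

lemma cond_set_antimono: "\<psi> \<subseteq>\<^sub>m \<psi>' \<Longrightarrow> cond_set \<Omega> \<psi>' \<subseteq> cond_set \<Omega> \<psi>"
  by (fastforce simp: cond_set_def consistent_def map_le_def dom_def)

lemma cond_marginal_observed: "v \<in> dom \<psi> \<Longrightarrow> cond_marginal \<Omega> f \<psi> v = 0"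
  by (simp add: cond_marginal_def insert_absorb)

lemma selected_0 [simp]: "selected \<pi> \<phi> 0 = {}"
  by (simp add: selected_def)

lemma selected_Suc: "selected \<pi> \<phi> (Suc t) = insert (\<pi> (run \<pi> \<phi> t)) (selected \<pi> \<phi> t)"
  by (auto simp: selected_def)

lemma map_of_run: "map_of (run \<pi> \<phi> t) = revealed \<phi> (selected \<pi> \<phi> t)"
  by (induction t) (auto simp: revealed_apply selected_Suc map_add_def fun_eq_iff)

lemma run_cong: "\<forall>v\<in>selected \<pi> \<phi> t. \<phi>' v = \<phi> v \<Longrightarrow> run \<pi> \<phi>' t = run \<pi> \<phi> t"
  by (induction t) (simp_all add: selected_Suc)

lemma selected_subset_items:
  "valid_policy n \<Omega> K \<pi> \<Longrightarrow> \<phi> \<in> \<Omega> \<Longrightarrow> t \<le> K \<Longrightarrow> selected \<pi> \<phi> t \<subseteq> {1..n}"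
  by (induction t) (auto simp: valid_policy_def selected_Suc)

text \<open>The analogue of a stopping time: a policy's selected set and next item are observable.\<close>

definition observable :: "((nat \<Rightarrow> nat) \<Rightarrow> nat set) \<Rightarrow> ((nat \<Rightarrow> nat) \<Rightarrow> nat) \<Rightarrow> bool" where
  "observable A v \<longleftrightarrow> (\<forall>\<phi> \<phi>'. (\<forall>u\<in>A \<phi>. \<phi>' u = \<phi> u) \<longrightarrow> A \<phi>' = A \<phi> \<and> v \<phi>' = v \<phi>)"

lemma observable_next_item: "observable (\<lambda>\<phi>. selected \<pi> \<phi> t) (\<lambda>\<phi>. \<pi> (run \<pi> \<phi> t))"
  unfolding observable_def by (metis run_cong selected_def)

lemma observable_Un: "observable A v \<Longrightarrow> observable B w \<Longrightarrow> observable (\<lambda>\<phi>. A \<phi> \<union> B \<phi>) w"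
  unfolding observable_def by (metis UnCI)

lemma sum_eq_sum_class_averages:
  fixes X :: "'a \<Rightarrow> real"
  assumes "finite S" and classes: "\<And>x. x \<in> S \<Longrightarrow> C x = {y \<in> S. C y = C x}"
  shows "(\<Sum>x\<in>S. X x) = (\<Sum>x\<in>S. (\<Sum>y\<in>C x. X y) / card (C x))"
proof -
  have group: "(\<Sum>c\<in>C ` S. \<Sum>x\<in>{x \<in> S. C x = c}. h x) = (\<Sum>x\<in>S. h x)" for h :: "'a \<Rightarrow> real"
    using \<open>finite S\<close> by (intro sum.group) auto
  have "(\<Sum>x\<in>{x \<in> S. C x = c}. (\<Sum>y\<in>C x. X y) / card (C x)) = (\<Sum>x\<in>{x \<in> S. C x = c}. X x)"
    if "c \<in> C ` S" for c
  proof -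
    from that obtain z where "z \<in> S" and c: "c = C z" by blast
    then have c_class: "{x \<in> S. C x = c} = c" using classes by auto
    have "finite {x \<in> S. C x = c}" and "z \<in> {x \<in> S. C x = c}"
      using \<open>finite S\<close> \<open>z \<in> S\<close> c by auto
    then have "finite c" and "c \<noteq> {}" unfolding c_class by auto
    have "(\<Sum>x\<in>{x \<in> S. C x = c}. (\<Sum>y\<in>C x. X y) / card (C x)) = (\<Sum>x\<in>c. (\<Sum>y\<in>c. X y) / card c)"
      unfolding c_class by (rule sum.cong) (use c_class in auto)
    also have "\<dots> = (\<Sum>y\<in>c. X y)" using \<open>finite c\<close> \<open>c \<noteq> {}\<close> by simp
    finally show ?thesis unfolding c_class .
  qed
  then show ?thesis unfolding group[symmetric] by simp
qed

text \<open>The tower property of conditional expectation under the uniform prior.\<close>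

lemma sum_marginal_eq_sum_cond_marginal:
  fixes f :: "nat set \<Rightarrow> (nat \<Rightarrow> nat) \<Rightarrow> real"
  assumes "finite \<Omega>" and obs: "observable A v"
  shows "(\<Sum>\<phi>\<in>\<Omega>. f (insert (v \<phi>) (A \<phi>)) \<phi> - f (A \<phi>) \<phi>)
       = (\<Sum>\<phi>\<in>\<Omega>. cond_marginal \<Omega> f (revealed \<phi> (A \<phi>)) (v \<phi>))"
proof -
  define C where "C \<phi> = cond_set \<Omega> (revealed \<phi> (A \<phi>))" for \<phi>
  have C: "C \<phi> = {\<phi>' \<in> \<Omega>. \<forall>u\<in>A \<phi>. \<phi>' u = \<phi> u}" for \<phi>
    by (simp add: C_def cond_set_revealed)
  have same: "A \<phi>' = A \<phi> \<and> v \<phi>' = v \<phi>" if "\<phi>' \<in> C \<phi>" for \<phi> \<phi>'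
  proof -
    have "\<forall>u\<in>A \<phi>. \<phi>' u = \<phi> u" using that by (simp add: C)
    with obs show ?thesis unfolding observable_def by blast
  qed
  have "C \<phi> = {\<phi>' \<in> \<Omega>. C \<phi>' = C \<phi>}" if "\<phi> \<in> \<Omega>" for \<phi>
  proof (intro equalityI subsetI)
    fix \<phi>' assume "\<phi>' \<in> C \<phi>"
    then have "\<phi>' \<in> \<Omega>" and "\<forall>u\<in>A \<phi>. \<phi>' u = \<phi> u" and "A \<phi>' = A \<phi>"
      using same[of \<phi>' \<phi>] by (simp_all add: C)
    then show "\<phi>' \<in> {\<phi>' \<in> \<Omega>. C \<phi>' = C \<phi>}" unfolding C by auto
  next
    fix \<phi>' assume "\<phi>' \<in> {\<phi>' \<in> \<Omega>. C \<phi>' = C \<phi>}"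
    moreover have "\<phi>' \<in> \<Omega> \<Longrightarrow> \<phi>' \<in> C \<phi>'" by (simp add: C)
    ultimately show "\<phi>' \<in> C \<phi>" by simp
  qed
  then have "(\<Sum>\<phi>\<in>\<Omega>. f (insert (v \<phi>) (A \<phi>)) \<phi> - f (A \<phi>) \<phi>)
      = (\<Sum>\<phi>\<in>\<Omega>. (\<Sum>\<phi>'\<in>C \<phi>. f (insert (v \<phi>') (A \<phi>')) \<phi>' - f (A \<phi>') \<phi>') / card (C \<phi>))"
    by (rule sum_eq_sum_class_averages[OF \<open>finite \<Omega>\<close>])
  also have "\<dots> = (\<Sum>\<phi>\<in>\<Omega>. (\<Sum>\<phi>'\<in>C \<phi>. f (insert (v \<phi>) (A \<phi>)) \<phi>' - f (A \<phi>) \<phi>') / card (C \<phi>))"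
    using same by (intro sum.cong refl arg_cong2[where f = "(/)"]) simp_all
  finally show ?thesis by (simp only: cond_marginal_def C_def dom_revealed)
qed

definition disagreements :: "'a set \<Rightarrow> ('a \<Rightarrow> 'b) \<Rightarrow> nat" where
  "disagreements S h = (\<Sum>x\<in>S. card {y \<in> S. h y \<noteq> h x})"

lemma card_filter_insert:
  "finite T \<Longrightarrow> x \<notin> T \<Longrightarrow> card {y \<in> insert x T. P y} = card {y \<in> T. P y} + (if P x then 1 else 0)"
proof -
  assume "finite T" "x \<notin> T"
  have "{y \<in> insert x T. P y} = (if P x then insert x {y \<in> T. P y} else {y \<in> T. P y})" by auto
  then show ?thesis using \<open>finite T\<close> \<open>x \<notin> T\<close> by simp
qed

lemma disagreements_insert:
  assumes "finite T" and "x \<notin> T"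
  shows "disagreements (insert x T) h = disagreements T h + 2 * card {y \<in> T. h y \<noteq> h x}"
proof -
  have indicators: "(\<Sum>z\<in>T. if h x \<noteq> h z then 1 else 0 :: nat) = card {y \<in> T. h y \<noteq> h x}"
    using \<open>finite T\<close> by (simp add: sum.inter_filter[symmetric] eq_commute)
  have "disagreements (insert x T) h
      = card {y \<in> insert x T. h y \<noteq> h x} + (\<Sum>z\<in>T. card {y \<in> insert x T. h y \<noteq> h z})"
    unfolding disagreements_def using assms by (rule sum.insert)
  also have "\<dots> = card {y \<in> T. h y \<noteq> h x} + disagreements T h
      + (\<Sum>z\<in>T. if h x \<noteq> h z then 1 else 0)"
    unfolding disagreements_def by (simp only: card_filter_insert[OF assms] sum.distrib) simp
  finally show ?thesis unfolding indicators by simp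
qed

lemma disagreements_le:
  assumes "finite T"
  shows "disagreements T h \<le> 2 * card {y \<in> T. h y \<noteq> h x} * card T"
proof -
  let ?d = "card {y \<in> T. h y \<noteq> h x}"
  have "card {y \<in> T. h y \<noteq> h z} \<le> card T" for z
    using \<open>finite T\<close> by (intro card_mono) auto
  then have "card {y \<in> T. h y \<noteq> h z} \<le> (if h z \<noteq> h x then card T else 0) + ?d" for z
    by (cases "h z = h x") (simp_all add: trans_le_add1)
  then have "disagreements T h \<le> (\<Sum>z\<in>T. (if h z \<noteq> h x then card T else 0) + ?d)"
    unfolding disagreements_def by (rule sum_mono)
  also have "\<dots> = 2 * ?d * card T"
    using \<open>finite T\<close> by (simp add: sum.distrib sum.inter_filter[symmetric])
  finally show ?thesis .
qed

lemma disagreement_average_insert: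
  assumes "finite T" and "T \<noteq> {}" and "x \<notin> T"
  shows "disagreements T h / card T \<le> disagreements (insert x T) h / card (insert x T)"
proof -
  define D m d where "D = real (disagreements T h)" and "m = real (card T)"
    and "d = real (card {y \<in> T. h y \<noteq> h x})"
  have "m > 0" using assms by (simp add: m_def card_gt_0_iff)
  have "D \<le> 2 * d * m"
    using of_nat_mono[OF disagreements_le[OF \<open>finite T\<close>, of h x]] unfolding D_def d_def m_def by simp
  with \<open>m > 0\<close> have "D / m \<le> (D + 2 * d) / (m + 1)"
    by (simp add: divide_simps) argo
  then show ?thesis
    using assms by (simp add: disagreements_insert D_def d_def m_def add.commute)
qed

lemma disagreement_average_mono:
  assumes "finite S" and "T \<subseteq> S" and "T \<noteq> {}"
  shows "disagreements T h / card T \<le> disagreements S h / card S"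
proof -
  have "disagreements T h / card T \<le> disagreements (T \<union> B) h / card (T \<union> B)" if "finite B" for B
    using that
  proof (induction B rule: finite_induct)
    case (insert x B)
    show ?case
    proof (cases "x \<in> T \<union> B")
      case True
      then have "T \<union> insert x B = T \<union> B" by blast
      then show ?thesis using insert.IH by simp
    next
      case False
      have "T \<union> insert x B = insert x (T \<union> B)" by blast
      moreover have "finite (T \<union> B)" using assms insert finite_subset by blast
      ultimately show ?thesis
        using insert.IH disagreement_average_insert[of "T \<union> B" x h] False \<open>T \<noteq> {}\<close> by simp
    qed
  qed simp
  from this[of "S - T"] show ?thesis
    using assms by (simp add: Un_absorb1)
qed

lemma f_match_insert:
  assumes "finite \<Omega>"
  shows "f_match \<Omega> (insert v I) \<phi> - f_match \<Omega> I \<phi> = card {g \<in> Omega_restr \<Omega> I \<phi>. g v \<noteq> \<phi> v}"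
proof -
  let ?S = "Omega_restr \<Omega> I \<phi>"
  have "Omega_restr \<Omega> (insert v I) \<phi> = {g \<in> ?S. g v = \<phi> v}"
    by (auto simp: Omega_restr_def)
  moreover have "card ?S = card {g \<in> ?S. g v = \<phi> v} + card {g \<in> ?S. g v \<noteq> \<phi> v}"
    using assms by (subst card_Un_disjoint[symmetric]) (auto simp: Omega_restr_def intro: arg_cong[where f = card])
  ultimately show ?thesis by (simp add: f_match_def)
qed

lemma cond_set_eq_Omega_restr:
  "\<phi> \<in> cond_set \<Omega> \<psi> \<Longrightarrow> cond_set \<Omega> \<psi> = Omega_restr \<Omega> (dom \<psi>) \<phi>"
  by (force simp: cond_set_def consistent_def Omega_restr_def)

lemma cond_marginal_f_match:
  assumes "finite \<Omega>"
  shows "cond_marginal \<Omega> (f_match \<Omega>) \<psi> v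
       = disagreements (cond_set \<Omega> \<psi>) (\<lambda>\<phi>. \<phi> v) / card (cond_set \<Omega> \<psi>)"
proof -
  let ?S = "cond_set \<Omega> \<psi>"
  have "f_match \<Omega> (insert v (dom \<psi>)) \<phi> - f_match \<Omega> (dom \<psi>) \<phi> = card {g \<in> ?S. g v \<noteq> \<phi> v}"
    if "\<phi> \<in> ?S" for \<phi>
    using f_match_insert[OF assms] cond_set_eq_Omega_restr[OF that] by simp
  then show ?thesis unfolding cond_marginal_def disagreements_def by simp
qed

lemma f_match_adaptive_monotone: "finite \<Omega> \<Longrightarrow> adaptive_monotone n \<Omega> (f_match \<Omega>)"
  by (simp add: adaptive_monotone_def cond_marginal_f_match)

lemma f_match_adaptive_submodular:
  assumes "finite \<Omega>"
  shows "adaptive_submodular n \<Omega> (f_match \<Omega>)"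
  unfolding adaptive_submodular_def
proof (intro allI impI)
  fix \<psi> \<psi>' v
  assume "partial_realization n \<Omega> \<psi>'" and "\<psi> \<subseteq>\<^sub>m \<psi>'"
  have "finite (cond_set \<Omega> \<psi>)" using assms by (simp add: cond_set_def)
  moreover have "cond_set \<Omega> \<psi>' \<subseteq> cond_set \<Omega> \<psi>" using \<open>\<psi> \<subseteq>\<^sub>m \<psi>'\<close> by (rule cond_set_antimono)
  moreover have "cond_set \<Omega> \<psi>' \<noteq> {}"
    using \<open>partial_realization n \<Omega> \<psi>'\<close> by (auto simp: partial_realization_def cond_set_def)
  ultimately show "cond_marginal \<Omega> (f_match \<Omega>) \<psi>' v \<le> cond_marginal \<Omega> (f_match \<Omega>) \<psi> v"
    unfolding cond_marginal_f_match[OF assms] by (rule disagreement_average_mono)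
qed

lemma f_match_mono:
  assumes "finite \<Omega>" and "A \<subseteq> B"
  shows "f_match \<Omega> A \<phi> \<le> f_match \<Omega> B \<phi>"
proof -
  have "card (Omega_restr \<Omega> B \<phi>) \<le> card (Omega_restr \<Omega> A \<phi>)"
    using assms by (intro card_mono) (auto simp: Omega_restr_def)
  then show ?thesis by (simp add: f_match_def)
qed

lemma f_match_empty: "f_match \<Omega> {} \<phi> = 0"
  by (simp add: f_match_def Omega_restr_def)

lemma finite_perfect_matchings: "finite (perfect_matchings n E)"
proof (rule finite_subset)
  show "perfect_matchings n E \<subseteq> {1..n} \<rightarrow>\<^sub>E {1..n}" by (auto simp: perfect_matchings_def)
qed (simp add: finite_PiE)

lemma gap_bound_from_recurrence:
  fixes G :: "nat \<Rightarrow> real"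
  assumes "K > 0" and step: "\<And>i. i < K \<Longrightarrow> F - G i \<le> K * (G (Suc i) - G i)"
    and "G 0 = 0" and "F \<ge> 0"
  shows "(1 - 1 / exp 1) * F \<le> G K"
proof -
  have shrink: "F - G i \<le> (1 - 1 / K) ^ i * F" if "i \<le> K" for i
    using that
  proof (induction i)
    case (Suc i)
    have "F - G (Suc i) \<le> (1 - 1 / K) * (F - G i)"
      using step[of i] Suc.prems \<open>K > 0\<close> by (simp add: field_simps)
    also have "\<dots> \<le> (1 - 1 / K) * ((1 - 1 / K) ^ i * F)"
      using Suc \<open>K > 0\<close> by (intro mult_left_mono) auto
    finally show ?case by simp
  qed (simp add: \<open>G 0 = 0\<close>)
  have "(1 - 1 / real K) ^ K \<le> exp (-1)"
    using exp_ge_one_minus_x_over_n_power_n[of 1 K] \<open>K > 0\<close> by simp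
  then have "F - G K \<le> exp (-1) * F"
    using shrink[of K] mult_right_mono[OF _ \<open>F \<ge> 0\<close>] by fastforce
  then show ?thesis by (simp add: exp_minus field_simps)
qed

locale adaptive_submodular_objective =
  fixes n :: nat and \<Omega> :: "(nat \<Rightarrow> nat) set" and f :: "nat set \<Rightarrow> (nat \<Rightarrow> nat) \<Rightarrow> real"
  assumes finite_Omega: "finite \<Omega>"
    and f_mono: "\<And>A B \<phi>. A \<subseteq> B \<Longrightarrow> f A \<phi> \<le> f B \<phi>"
    and f_empty: "\<And>\<phi>. f {} \<phi> = 0"
    and f_adaptive_monotone: "adaptive_monotone n \<Omega> f"
    and f_adaptive_submodular: "adaptive_submodular n \<Omega> f"
begin

definition total_value :: "policy \<Rightarrow> nat \<Rightarrow> real" where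
  "total_value \<pi> t = (\<Sum>\<phi>\<in>\<Omega>. f (selected \<pi> \<phi> t) \<phi>)"

lemma cond_marginal_le_greedy_choice:
  assumes g: "greedy_policy n \<Omega> f K g" and "\<phi> \<in> \<Omega>" and "i < K"
    and "selected g \<phi> i \<subseteq> A" and "A \<subseteq> {1..n}" and "u \<in> {1..n}"
  shows "cond_marginal \<Omega> f (revealed \<phi> A) u
       \<le> cond_marginal \<Omega> f (revealed \<phi> (selected g \<phi> i)) (g (run g \<phi> i))"
proof -
  let ?D = "selected g \<phi> i"
  have valid: "valid_policy n \<Omega> K g" using g by (simp add: greedy_policy_def)
  have "?D \<subseteq> {1..n}" using selected_subset_items[OF valid \<open>\<phi> \<in> \<Omega>\<close>] \<open>i < K\<close> by simp
  have choice: "g (run g \<phi> i) \<in> {1..n} - ?D" using valid \<open>\<phi> \<in> \<Omega>\<close> \<open>i < K\<close> by (simp add: valid_policy_def)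
  show ?thesis
  proof (cases "u \<in> A")
    case True
    then show ?thesis
      using f_adaptive_monotone partial_realization_revealed[OF \<open>\<phi> \<in> \<Omega>\<close> \<open>?D \<subseteq> {1..n}\<close>] choice
      by (simp add: cond_marginal_observed adaptive_monotone_def)
  next
    case False
    have "cond_marginal \<Omega> f (revealed \<phi> A) u \<le> cond_marginal \<Omega> f (revealed \<phi> ?D) u"
      using f_adaptive_submodular False assms(4-6) \<open>?D \<subseteq> {1..n}\<close>
        partial_realization_revealed[OF \<open>\<phi> \<in> \<Omega>\<close>] revealed_mono
      unfolding adaptive_submodular_def by simp
    also have "\<dots> \<le> cond_marginal \<Omega> f (revealed \<phi> ?D) (g (run g \<phi> i))"
      using g \<open>\<phi> \<in> \<Omega>\<close> \<open>i < K\<close> \<open>u \<in> {1..n}\<close> False \<open>?D \<subseteq> A\<close>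
      unfolding greedy_policy_def map_of_run by blast
    finally show ?thesis .
  qed
qed

lemma policy_step_le_greedy_step:
  assumes g: "greedy_policy n \<Omega> f K g" and p: "valid_policy n \<Omega> K p" and "i < K" and "t < K"
  shows "(\<Sum>\<phi>\<in>\<Omega>. f (selected g \<phi> i \<union> selected p \<phi> (Suc t)) \<phi> - f (selected g \<phi> i \<union> selected p \<phi> t) \<phi>)
       \<le> total_value g (Suc i) - total_value g i"
proof -
  define D where "D \<phi> = selected g \<phi> i" for \<phi>
  define A where "A \<phi> = D \<phi> \<union> selected p \<phi> t" for \<phi>
  have valid: "valid_policy n \<Omega> K g" using g by (simp add: greedy_policy_def)
  have "(\<Sum>\<phi>\<in>\<Omega>. f (selected g \<phi> i \<union> selected p \<phi> (Suc t)) \<phi> - f (selected g \<phi> i \<union> selected p \<phi> t) \<phi>)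
      = (\<Sum>\<phi>\<in>\<Omega>. f (insert (p (run p \<phi> t)) (A \<phi>)) \<phi> - f (A \<phi>) \<phi>)"
    by (simp add: A_def D_def selected_Suc)
  also have "\<dots> = (\<Sum>\<phi>\<in>\<Omega>. cond_marginal \<Omega> f (revealed \<phi> (A \<phi>)) (p (run p \<phi> t)))"
    unfolding A_def D_def
    by (rule sum_marginal_eq_sum_cond_marginal[OF finite_Omega observable_Un[OF observable_next_item observable_next_item]])
  also have "\<dots> \<le> (\<Sum>\<phi>\<in>\<Omega>. cond_marginal \<Omega> f (revealed \<phi> (D \<phi>)) (g (run g \<phi> i)))"
  proof (rule sum_mono)
    fix \<phi> assume "\<phi> \<in> \<Omega>"
    have "A \<phi> \<subseteq> {1..n}" and "p (run p \<phi> t) \<in> {1..n}"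
      using selected_subset_items[OF valid \<open>\<phi> \<in> \<Omega>\<close>] selected_subset_items[OF p \<open>\<phi> \<in> \<Omega>\<close>]
        p \<open>\<phi> \<in> \<Omega>\<close> \<open>i < K\<close> \<open>t < K\<close> by (auto simp: A_def D_def valid_policy_def)
    then show "cond_marginal \<Omega> f (revealed \<phi> (A \<phi>)) (p (run p \<phi> t))
        \<le> cond_marginal \<Omega> f (revealed \<phi> (D \<phi>)) (g (run g \<phi> i))"
      using cond_marginal_le_greedy_choice[OF g \<open>\<phi> \<in> \<Omega>\<close> \<open>i < K\<close>] by (simp add: A_def D_def)
  qed
  also have "\<dots> = (\<Sum>\<phi>\<in>\<Omega>. f (insert (g (run g \<phi> i)) (D \<phi>)) \<phi> - f (D \<phi>) \<phi>)"
    unfolding D_def by (rule sum_marginal_eq_sum_cond_marginal[OF finite_Omega observable_next_item, symmetric])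
  also have "\<dots> = total_value g (Suc i) - total_value g i"
    by (simp add: total_value_def D_def selected_Suc sum_subtractf)
  finally show ?thesis .
qed

lemma greedy_gap_recurrence:
  assumes g: "greedy_policy n \<Omega> f K g" and p: "valid_policy n \<Omega> K p" and "i < K"
  shows "total_value p K - total_value g i \<le> K * (total_value g (Suc i) - total_value g i)"
proof -
  let ?h = "\<lambda>\<phi> t. f (selected g \<phi> i \<union> selected p \<phi> t) \<phi>"
  have "total_value p K - total_value g i \<le> (\<Sum>\<phi>\<in>\<Omega>. ?h \<phi> K - ?h \<phi> 0)"
    unfolding total_value_def sum_subtractf[symmetric] by (intro sum_mono diff_right_mono) (simp add: f_mono)
  also have "\<dots> = (\<Sum>\<phi>\<in>\<Omega>. \<Sum>t<K. ?h \<phi> (Suc t) - ?h \<phi> t)"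
    by (intro sum.cong refl sum_lessThan_telescope[of "?h _" K, symmetric])
  also have "\<dots> = (\<Sum>t<K. \<Sum>\<phi>\<in>\<Omega>. ?h \<phi> (Suc t) - ?h \<phi> t)"
    by (rule sum.swap)
  also have "\<dots> \<le> (\<Sum>t<K. total_value g (Suc i) - total_value g i)"
    using policy_step_le_greedy_step[OF g p \<open>i < K\<close>] by (intro sum_mono) simp
  finally show ?thesis by simp
qed

theorem greedy_approximation:
  assumes g: "greedy_policy n \<Omega> f K g" and p: "valid_policy n \<Omega> K p"
  shows "(1 - 1 / exp 1) * policy_value \<Omega> f K p \<le> policy_value \<Omega> f K g"
proof (cases "K = 0")
  case True
  then show ?thesis by (simp add: policy_value_def f_empty)
next
  case False
  have "total_value p K \<ge> 0"
    unfolding total_value_def using f_mono[of "{}"] f_empty by (simp add: sum_nonneg)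
  then have "(1 - 1 / exp 1) * total_value p K \<le> total_value g K"
    using False greedy_gap_recurrence[OF g p]
    by (intro gap_bound_from_recurrence) (auto simp: total_value_def f_empty)
  then show ?thesis
    unfolding policy_value_def total_value_def[symmetric] by (simp add: divide_right_mono)
qed

end

theorem theorem2:
  fixes n :: nat and E :: "nat \<Rightarrow> nat \<Rightarrow> bool"
  defines "\<Omega> \<equiv> perfect_matchings n E"
  assumes nonempty: "\<Omega> \<noteq> {}"
  shows "adaptive_monotone n \<Omega> (f_match \<Omega>) \<and> adaptive_submodular n \<Omega> (f_match \<Omega>) \<and>
    (\<forall>K\<in>{1..n}. \<forall>\<pi>g \<pi>. greedy_policy n \<Omega> (f_match \<Omega>) K \<pi>g \<longrightarrow> valid_policy n \<Omega> K \<pi> \<longrightarrow>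
       policy_value \<Omega> (f_match \<Omega>) K \<pi>g \<ge> (1 - 1 / exp 1) * policy_value \<Omega> (f_match \<Omega>) K \<pi>)"
proof -
  have "finite \<Omega>" unfolding \<Omega>_def by (rule finite_perfect_matchings)
  then interpret adaptive_submodular_objective n \<Omega> "f_match \<Omega>"
    by unfold_locales
      (simp_all add: f_match_mono f_match_empty f_match_adaptive_monotone f_match_adaptive_submodular)
  show ?thesis
    using f_adaptive_monotone f_adaptive_submodular greedy_approximation by blast
qed

end
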